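(* Let $\Gamma=([n],w)$ be a hypergraph with non-negative weights, $\rho\colon\mathrm{U}(n)\to\mathrm{U}(V)$ a finite-dimensional unitary representation, and $V'=\mathrm{TorInv}(\rho)^\perp$, which is invariant under ${\cal L}(\Gamma,\rho)$. Then every eigenvalue of the restriction of ${\cal L}(\Gamma,\rho)$ to $V'$ is at least $\phi(\Gamma)=\min_{i\in[n]}\sum_{B\ni i}w_B$.
   Context: A weighted hypergraph $\Gamma=([n],w)$ assigns $w_B\ge0$ to every $B\subseteq[n]$. $\mathrm{U}_B\le\mathrm{U}(n)$ is the subgroup of unitaries coinciding with the identity outside the minor indexed by $B$, with Haar probability measure $\mu_B$; ${\cal L}(\Gamma,\rho)=\sum_Bw_B[I-\int_{\mathrm{U}_B}\rho(A)d\mu_B(A)]$. $T_n$ is the diagonal subgroup of $\mathrm{U}(n)$ and $\mathrm{TorInv}(\rho)$ the subspace of vectors fixed by $\rho(T_n)$. *)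

theory Defs
  imports "HOL-Analysis.Analysis" "HOL-Probability.Probability"
begin

text \<open>Complex matrices are \<open>complex^'k^'k\<close>; the index type \<open>'n\<close> plays the role of [n].\<close>

definition cadj :: "complex^'k^'k \<Rightarrow> complex^'k^'k" where
  "cadj A = (\<chi> i j. cnj (A $ j $ i))"

definition unitary_mat :: "complex^'k^'k \<Rightarrow> bool" where
  "unitary_mat A \<longleftrightarrow> A ** cadj A = mat 1 \<and> cadj A ** A = mat 1"

definition unitary_group :: "(complex^'k^'k) set" where
  "unitary_group = {A. unitary_mat A}"

definition U_sub :: "'k set \<Rightarrow> (complex^'k^'k) set" where
  "U_sub B = {A \<in> unitary_group. \<forall>i j. (i \<notin> B \<or> j \<notin> B) \<longrightarrow>
      A $ i $ j = (if i = j then 1 else 0)}"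

definition torus :: "(complex^'k^'k) set" where
  "torus = {A \<in> unitary_group. \<forall>i j. i \<noteq> j \<longrightarrow> A $ i $ j = 0}"

definition is_haar_prob :: "(complex^'k^'k) measure \<Rightarrow> (complex^'k^'k) set \<Rightarrow> bool" where
  "is_haar_prob \<mu> G \<longleftrightarrow> prob_space \<mu> \<and> sets \<mu> = sets borel \<and> emeasure \<mu> G = 1 \<and>
     (\<forall>g\<in>G. \<forall>S\<in>sets borel. emeasure \<mu> ((\<lambda>A. g ** A) -` S) = emeasure \<mu> S)"

definition unitary_rep :: "(complex^'n^'n \<Rightarrow> complex^'m^'m) \<Rightarrow> bool" where
  "unitary_rep \<rho> \<longleftrightarrow> continuous_on unitary_group \<rho> \<and>
     (\<forall>A\<in>unitary_group. unitary_mat (\<rho> A)) \<and>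
     (\<forall>A\<in>unitary_group. \<forall>B\<in>unitary_group. \<rho> (A ** B) = \<rho> A ** \<rho> B)"

definition hinner :: "complex^'m \<Rightarrow> complex^'m \<Rightarrow> complex" where
  "hinner u v = (\<Sum>i\<in>UNIV. cnj (u $ i) * v $ i)"

definition TorInv :: "(complex^'n^'n \<Rightarrow> complex^'m^'m) \<Rightarrow> (complex^'m) set" where
  "TorInv \<rho> = {v. \<forall>t\<in>torus. \<rho> t *v v = v}"

definition orth_compl :: "(complex^'m) set \<Rightarrow> (complex^'m) set" where
  "orth_compl W = {v. \<forall>u\<in>W. hinner u v = 0}"

definition hyper_laplacian ::
  "('n set \<Rightarrow> real) \<Rightarrow> ('n set \<Rightarrow> (complex^'n^'n) measure) \<Rightarrow>
   (complex^'n^'n \<Rightarrow> complex^'m^'m) \<Rightarrow> complex^'m^'m" where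
  "hyper_laplacian w \<mu> \<rho> =
     (\<Sum>B\<in>(UNIV :: 'n set set). w B *\<^sub>R (mat 1 - (LINT A : U_sub B | \<mu> B. \<rho> A)))"

definition phi :: "('n::finite set \<Rightarrow> real) \<Rightarrow> real" where
  "phi w = Min ((\<lambda>i. \<Sum>B\<in>{B. i \<in> B}. w B) ` UNIV)"

end

theory Submission
  imports Defs
begin

text \<open>Averaging \<open>\<rho>\<close> over \<open>U_B\<close> against Haar measure gives the orthogonal projection \<open>P_B\<close>
  onto the \<open>U_B\<close>-invariant vectors, so \<open>\<langle>v, L v\<rangle> = \<Sum>\<^sub>B w_B \<parallel>v - P_B v\<parallel>\<^sup>2\<close>.
  Enumerate \<open>[n]\<close> as \<open>i\<^sub>1, \<dots>, i\<^sub>N\<close> and apply \<open>P_{i\<^sub>1}, \<dots>, P_{i\<^sub>N}\<close> to \<open>v\<close> in turn.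
  By Pythagoras, \<open>\<parallel>v\<parallel>\<^sup>2\<close> is the sum of the squared defects \<open>d\<^sub>p\<close> of the single steps plus the
  squared norm of the final vector; the final vector is fixed by every \<open>U_{i}\<close>, and these generate
  the torus, so it is torus invariant and hence zero when \<open>v \<bottom> TorInv \<rho>\<close>.
  Each \<open>P_{i}\<close> preserves the \<open>U_B\<close>-invariant vectors (it fixes them if \<open>i \<in> B\<close> and commutes with
  \<open>U_B\<close> otherwise), so the defects \<open>d\<^sub>p\<close> with \<open>i\<^sub>p \<in> B\<close> are also defects of the same process
  started at \<open>v - P_B v\<close>, whence \<open>\<Sum>\<^bsub>i\<^sub>p \<in> B\<^esub> \<parallel>d\<^sub>p\<parallel>\<^sup>2 \<le> \<parallel>v - P_B v\<parallel>\<^sup>2\<close>.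
  Weighting by \<open>w_B\<close> and summing over \<open>B\<close> gives \<open>\<langle>v, L v\<rangle> \<ge> \<phi>(\<Gamma>) \<parallel>v\<parallel>\<^sup>2\<close>.\<close>

section \<open>Hermitian inner product\<close>

lemma hinner_0_right [simp]: "hinner u 0 = 0"
  by (simp add: hinner_def)

lemma hinner_add_left: "hinner (u + v) w = hinner u w + hinner v w"
  by (simp add: hinner_def distrib_right sum.distrib)

lemma hinner_add_right: "hinner u (v + w) = hinner u v + hinner u w"
  by (simp add: hinner_def distrib_left sum.distrib)

lemma hinner_diff_left: "hinner (u - v) w = hinner u w - hinner v w"
  by (simp add: hinner_def left_diff_distrib sum_subtractf)

lemma hinner_diff_right: "hinner u (v - w) = hinner u v - hinner u w"
  by (simp add: hinner_def right_diff_distrib sum_subtractf)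

lemma hinner_scalar_left: "hinner (c *s u) v = cnj c * hinner u v"
  by (simp add: hinner_def sum_distrib_left mult.assoc)

lemma hinner_scalar_right: "hinner u (c *s v) = c * hinner u v"
  by (simp add: hinner_def sum_distrib_left algebra_simps)

lemma hinner_scaleR_right: "hinner u (c *\<^sub>R v) = of_real c * hinner u v"
proof -
  have "c *\<^sub>R v = of_real c *s v" by (auto simp: vec_eq_iff complex_eq_iff)
  then show ?thesis by (simp add: hinner_scalar_right)
qed

lemma hinner_sum_right: "hinner u (sum f S) = (\<Sum>x\<in>S. hinner u (f x))"
  by (induction S rule: infinite_finite_induct) (simp_all add: hinner_add_right)

lemma cnj_hinner: "cnj (hinner u v) = hinner v u"
  by (simp add: hinner_def mult.commute)

lemma hinner_self: "hinner x x = of_real ((norm x)\<^sup>2)"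
proof -
  have "(norm x)\<^sup>2 = (\<Sum>i\<in>UNIV. (norm (x $ i))\<^sup>2)"
    by (simp add: norm_vec_def L2_set_def sum_nonneg)
  then have "of_real ((norm x)\<^sup>2) = (\<Sum>i\<in>UNIV. of_real ((norm (x $ i))\<^sup>2) :: complex)"
    by simp
  also have "\<dots> = hinner x x"
    unfolding hinner_def complex_norm_square by (simp add: mult.commute)
  finally show ?thesis by simp
qed

lemma hinner_self_eq_0: "hinner x x = 0 \<longleftrightarrow> x = 0"
  by (simp add: hinner_self)

lemma norm_add_square_if_hinner_eq_0:
  assumes "hinner a b = 0"
  shows "(norm (a + b))\<^sup>2 = (norm a)\<^sup>2 + (norm b)\<^sup>2"
proof -
  have "hinner b a = 0" using assms cnj_hinner[of a b] by simp
  then have "hinner (a + b) (a + b) = hinner a a + hinner b b"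
    using assms by (simp add: hinner_add_left hinner_add_right)
  then have "complex_of_real ((norm (a + b))\<^sup>2) = of_real ((norm a)\<^sup>2 + (norm b)\<^sup>2)"
    by (simp add: hinner_self)
  then show ?thesis using of_real_eq_iff by blast
qed

lemma hinner_matrix_vector_mult: "hinner (M *v x) y = hinner x (cadj M *v y)"
proof -
  have "hinner (M *v x) y = (\<Sum>i\<in>UNIV. \<Sum>j\<in>UNIV. cnj (M$i$j) * cnj (x$j) * y$i)"
    unfolding hinner_def matrix_vector_mult_def
    by (simp only: vec_lambda_beta cnj_sum complex_cnj_mult sum_distrib_right)
  also have "\<dots> = (\<Sum>j\<in>UNIV. \<Sum>i\<in>UNIV. cnj (M$i$j) * cnj (x$j) * y$i)"
    by (rule sum.swap)
  also have "\<dots> = hinner x (cadj M *v y)"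
    unfolding hinner_def matrix_vector_mult_def cadj_def
    by (simp only: vec_lambda_beta sum_distrib_left) (simp only: mult.commute mult.left_commute)
  finally show ?thesis .
qed

lemma cadj_eq_if_hinner_symmetric:
  assumes "\<And>x y. hinner (M *v x) y = hinner x (M *v y)"
  shows "cadj M = M"
proof -
  have "cadj M *v y = M *v y" for y
  proof -
    define d where "d = cadj M *v y - M *v y"
    have "hinner d d = 0"
      using assms[of d y] by (simp add: d_def hinner_diff_right hinner_matrix_vector_mult)
    then show ?thesis by (simp add: d_def hinner_self_eq_0)
  qed
  then show ?thesis by (simp add: matrix_eq)
qed

text \<open>Expanding \<open>\<parallel>x + t y\<parallel>\<^sup>2\<close> at \<open>t = - cnj \<langle>x, y\<rangle> / \<parallel>y\<parallel>\<^sup>2\<close> gives \<open>\<parallel>x\<parallel>\<^sup>2 - \<bar>\<langle>x, y\<rangle>\<bar>\<^sup>2 / \<parallel>y\<parallel>\<^sup>2\<close>.\<close>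
lemma hinner_eq_0_if_norm_le_norm_add:
  assumes "\<And>t. norm x \<le> norm (x + t *s y)"
  shows "hinner x y = 0"
proof (cases "y = 0")
  case False
  define c where "c = hinner x y"
  define n where "n = (norm y)\<^sup>2"
  define t where "t = - cnj c / of_real n"
  have n: "n > 0" using False by (simp add: n_def)
  have "complex_of_real ((norm (x + t *s y))\<^sup>2) = hinner (x + t *s y) (x + t *s y)"
    by (simp only: hinner_self)
  also have "\<dots> = hinner x x + t * c + cnj t * cnj c + cnj t * t * hinner y y"
    by (simp add: hinner_add_left hinner_add_right hinner_scalar_left
        hinner_scalar_right c_def cnj_hinner[symmetric, of x y] algebra_simps)
  also have "\<dots> = of_real ((norm x)\<^sup>2 - (cmod c)\<^sup>2 / n)"
    using n complex_norm_square[of c]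
    by (simp add: hinner_self t_def n_def field_simps power2_eq_square)
  finally have "(norm (x + t *s y))\<^sup>2 = (norm x)\<^sup>2 - (cmod c)\<^sup>2 / n"
    using of_real_eq_iff by blast
  moreover have "(norm x)\<^sup>2 \<le> (norm (x + t *s y))\<^sup>2"
    using assms by (simp add: power_mono)
  ultimately have "(cmod c)\<^sup>2 / n \<le> 0" by simp
  then show ?thesis using n by (simp add: c_def divide_le_0_iff)
qed simp

section \<open>Unitary and diagonal matrices\<close>

lemma sum_UNIV_eq_single:
  fixes f :: "'a::finite \<Rightarrow> 'b::comm_monoid_add"
  assumes "\<And>l. l \<noteq> i \<Longrightarrow> f l = 0"
  shows "(\<Sum>l\<in>UNIV. f l) = f i"
  using assms by (subst sum.mono_neutral_right[of UNIV "{i}"]) auto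

lemma matrix_mult_diagonal_right:
  assumes "\<And>i j. i \<noteq> j \<Longrightarrow> D $ i $ j = 0"
  shows "(A ** D) $ i $ j = A $ i $ j * D $ j $ j"
  unfolding matrix_matrix_mult_def by (simp, rule sum_UNIV_eq_single) (simp add: assms)

lemma matrix_mult_diagonal_left:
  assumes "\<And>i j. i \<noteq> j \<Longrightarrow> D $ i $ j = 0"
  shows "(D ** A) $ i $ j = D $ i $ i * A $ i $ j"
  unfolding matrix_matrix_mult_def by (simp, rule sum_UNIV_eq_single) (simp add: assms)

lemma cadj_matrix_mult: "cadj (A ** B) = cadj B ** cadj A"
  unfolding cadj_def matrix_matrix_mult_def
  by (simp only: vec_eq_iff vec_lambda_beta cnj_sum complex_cnj_mult)
    (simp only: mult.commute, simp)

lemma cadj_mat_1: "cadj (mat 1) = (mat 1 :: complex^'k^'k)"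
  by (auto simp: cadj_def mat_def vec_eq_iff)

lemma unitary_mat_1: "unitary_mat (mat 1 :: complex^'k^'k)"
  by (simp add: unitary_mat_def cadj_mat_1)

lemma unitary_mat_mult: "unitary_mat A \<Longrightarrow> unitary_mat B \<Longrightarrow> unitary_mat (A ** B)"
  unfolding unitary_mat_def cadj_matrix_mult by (metis matrix_mul_assoc matrix_mul_rid)

lemma unitary_mat_diagonal:
  assumes "\<And>i j. i \<noteq> j \<Longrightarrow> D $ i $ j = 0" and "\<And>i. D $ i $ i * cnj (D $ i $ i) = 1"
  shows "unitary_mat D"
proof -
  have "\<And>i j. i \<noteq> j \<Longrightarrow> cadj D $ i $ j = 0" by (simp add: cadj_def assms(1))
  then show ?thesis
    using assms by (auto simp: unitary_mat_def vec_eq_iff mat_def cadj_def mult.commute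
        matrix_mult_diagonal_left matrix_mult_diagonal_right)
qed

lemma norm_unitary_mat_vector_mult:
  assumes "unitary_mat U"
  shows "norm (U *v x) = norm x"
proof -
  have "hinner (U *v x) (U *v x) = hinner x x"
    using assms by (simp add: hinner_matrix_vector_mult matrix_vector_mul_assoc unitary_mat_def)
  then have "(norm (U *v x))\<^sup>2 = (norm x)\<^sup>2"
    by (simp only: hinner_self of_real_eq_iff)
  then show ?thesis by (simp add: power2_eq_iff_nonneg)
qed

lemma norm_unitary_mat_row:
  assumes "unitary_mat N"
  shows "norm (N $ i) = 1"
proof -
  have "hinner (N $ i) (N $ i) = (N ** cadj N) $ i $ i"
    by (simp add: matrix_matrix_mult_def cadj_def hinner_def mult.commute)
  also have "\<dots> = 1" using assms by (simp add: unitary_mat_def mat_def)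
  finally have "(norm (N $ i))\<^sup>2 = 1" by (simp only: hinner_self of_real_eq_1_iff)
  then show ?thesis using norm_ge_zero[of "N $ i"] by (auto simp: power2_eq_1_iff)
qed

lemma norm_unitary_mat_le:
  assumes "unitary_mat (N :: complex^'m::finite^'m)"
  shows "norm N \<le> real CARD('m)"
proof -
  have "norm N \<le> (\<Sum>i\<in>UNIV. norm (N $ i))"
    unfolding norm_vec_def by (rule L2_set_le_sum) simp
  then show ?thesis using norm_unitary_mat_row[OF assms] by simp
qed

section \<open>Orthogonal projections\<close>

definition orthogonal_projection :: "complex^'m^'m \<Rightarrow> bool" where
  "orthogonal_projection P \<longleftrightarrow> P ** P = P \<and> cadj P = P"

lemma orthogonal_projection_idem:
  "orthogonal_projection P \<Longrightarrow> P *v (P *v x) = P *v x"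
  by (simp add: orthogonal_projection_def matrix_vector_mul_assoc)

lemma hinner_orthogonal_projection:
  "orthogonal_projection P \<Longrightarrow> hinner (P *v a) b = hinner a (P *v b)"
  by (simp add: orthogonal_projection_def hinner_matrix_vector_mult)

lemma hinner_orthogonal_projection_residual:
  "orthogonal_projection P \<Longrightarrow> hinner (P *v a) (b - P *v b) = 0"
  by (simp add: hinner_orthogonal_projection orthogonal_projection_idem
      matrix_vector_mult_diff_distrib)

lemma hinner_self_orthogonal_projection_residual:
  assumes "orthogonal_projection P"
  shows "hinner z (z - P *v z) = of_real ((norm (z - P *v z))\<^sup>2)"
proof -
  have "hinner z (z - P *v z) = hinner (z - P *v z) (z - P *v z) + hinner (P *v z) (z - P *v z)"
    by (simp add: hinner_diff_left)
  then show ?thesis by (simp add: hinner_orthogonal_projection_residual[OF assms] hinner_self)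
qed

lemma norm_square_orthogonal_projection:
  assumes "orthogonal_projection P"
  shows "(norm z)\<^sup>2 = (norm (P *v z))\<^sup>2 + (norm (z - P *v z))\<^sup>2"
  using norm_add_square_if_hinner_eq_0[OF hinner_orthogonal_projection_residual[OF assms, of z z]]
  by simp

lemma orthogonal_projection_if_contraction:
  assumes idem: "P ** P = P" and contr: "\<And>x. norm (P *v x) \<le> norm x"
  shows "orthogonal_projection P"
proof -
  have residual: "hinner (P *v a) (b - P *v b) = 0" for a b
  proof (rule hinner_eq_0_if_norm_le_norm_add)
    fix t
    have "P *v (P *v a + t *s (b - P *v b)) = P *v a"
      using idem by (simp add: matrix_vector_right_distrib matrix_vector_mult_diff_distrib
          vector_scalar_commute matrix_vector_mul_assoc)
    then show "norm (P *v a) \<le> norm (P *v a + t *s (b - P *v b))"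
      using contr by metis
  qed
  have "hinner (P *v a) b = hinner a (P *v b)" for a b
  proof -
    have "hinner (a - P *v a) (P *v b) = 0"
      using residual[of b a] cnj_hinner by (metis complex_cnj_zero)
    then show ?thesis
      using residual[of a b] by (simp add: hinner_diff_left hinner_diff_right)
  qed
  then show ?thesis
    using idem cadj_eq_if_hinner_symmetric by (auto simp: orthogonal_projection_def)
qed

section \<open>Successive projections\<close>

definition sweep :: "('k \<Rightarrow> complex^'m^'m) \<Rightarrow> 'k list \<Rightarrow> complex^'m \<Rightarrow> complex^'m" where
  "sweep Q ks z = foldl (\<lambda>z k. Q k *v z) z ks"

definition sweep_defect ::
  "('k \<Rightarrow> complex^'m^'m) \<Rightarrow> 'k list \<Rightarrow> complex^'m \<Rightarrow> nat \<Rightarrow> complex^'m" where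
  "sweep_defect Q ks z p = sweep Q (take p ks) z - Q (ks ! p) *v sweep Q (take p ks) z"

lemma sweep_Nil [simp]: "sweep Q [] z = z"
  by (simp add: sweep_def)

lemma sweep_snoc [simp]: "sweep Q (ks @ [k]) z = Q k *v sweep Q ks z"
  by (simp add: sweep_def)

lemma sweep_diff: "sweep Q ks (a - b) = sweep Q ks a - sweep Q ks b"
  by (induction ks rule: rev_induct) (simp_all add: matrix_vector_mult_diff_distrib)

lemma sweep_defect_diff:
  "sweep_defect Q ks (a - b) p = sweep_defect Q ks a p - sweep_defect Q ks b p"
  by (simp add: sweep_defect_def sweep_diff matrix_vector_mult_diff_distrib)

lemma sweep_defect_snoc:
  "p < length ks \<Longrightarrow> sweep_defect Q (ks @ [k]) z p = sweep_defect Q ks z p"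
  "sweep_defect Q (ks @ [k]) z (length ks) = sweep Q ks z - Q k *v sweep Q ks z"
  by (simp_all add: sweep_defect_def nth_append)

lemma sweep_closed:
  assumes "\<And>k y. y \<in> S \<Longrightarrow> Q k *v y \<in> S" and "z \<in> S"
  shows "sweep Q ks z \<in> S"
  by (induction ks rule: rev_induct) (simp_all add: assms)

lemma norm_square_sweep:
  assumes "\<And>k. orthogonal_projection (Q k)"
  shows "(norm z)\<^sup>2 = (\<Sum>p<length ks. (norm (sweep_defect Q ks z p))\<^sup>2) + (norm (sweep Q ks z))\<^sup>2"
proof (induction ks rule: rev_induct)
  case (snoc k ks)
  have "(\<Sum>p<length ks. (norm (sweep_defect Q (ks @ [k]) z p))\<^sup>2)
      = (\<Sum>p<length ks. (norm (sweep_defect Q ks z p))\<^sup>2)"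
    by (rule sum.cong) (simp_all add: sweep_defect_snoc)
  then show ?case
    using snoc.IH norm_square_orthogonal_projection[OF assms[of k], of "sweep Q ks z"]
    by (simp add: sweep_defect_snoc)
qed simp

lemma sweep_defect_sum_le:
  assumes proj: "\<And>k. orthogonal_projection (Q k)"
    and closed: "\<And>k y. y \<in> S \<Longrightarrow> Q k *v y \<in> S"
    and fixed: "\<And>k y. k \<in> K \<Longrightarrow> y \<in> S \<Longrightarrow> Q k *v y = y"
    and "s \<in> S"
  shows "(\<Sum>p\<in>{p\<in>{..<length ks}. ks ! p \<in> K}. (norm (sweep_defect Q ks z p))\<^sup>2)
    \<le> (norm (z - s))\<^sup>2"
proof -
  have "sweep_defect Q ks z p = sweep_defect Q ks (z - s) p" if "ks ! p \<in> K" for p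
  proof -
    have "sweep Q (take p ks) s \<in> S" using closed \<open>s \<in> S\<close> by (rule sweep_closed)
    then have "sweep_defect Q ks s p = 0" using fixed that by (simp add: sweep_defect_def)
    then show ?thesis by (simp add: sweep_defect_diff)
  qed
  then have "(\<Sum>p\<in>{p\<in>{..<length ks}. ks ! p \<in> K}. (norm (sweep_defect Q ks z p))\<^sup>2)
      = (\<Sum>p\<in>{p\<in>{..<length ks}. ks ! p \<in> K}. (norm (sweep_defect Q ks (z - s) p))\<^sup>2)"
    by (intro sum.cong) auto
  also have "\<dots> \<le> (\<Sum>p<length ks. (norm (sweep_defect Q ks (z - s) p))\<^sup>2)"
    by (rule sum_mono2) auto
  also have "\<dots> \<le> (norm (z - s))\<^sup>2"
    using norm_square_sweep[where Q = Q and z = "z - s" and ks = ks, OF proj] by simp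
  finally show ?thesis .
qed

lemma sweep_fixed:
  assumes proj: "\<And>k. orthogonal_projection (Q k)"
    and fixed_closed: "\<And>k l y. Q k *v y = y \<Longrightarrow> Q k *v (Q l *v y) = Q l *v y"
    and "k \<in> set ks"
  shows "Q k *v sweep Q ks z = sweep Q ks z"
  using \<open>k \<in> set ks\<close>
proof (induction ks rule: rev_induct)
  case (snoc l ks)
  then show ?case using orthogonal_projection_idem[OF proj] fixed_closed by auto
qed simp

lemma hinner_sweep_if_fixed:
  assumes "\<And>k. orthogonal_projection (Q k)" and "\<And>k. Q k *v y = y"
  shows "hinner y (sweep Q ks z) = hinner y z"
  by (induction ks rule: rev_induct)
    (simp_all add: hinner_orthogonal_projection[OF assms(1), symmetric] assms(2))

lemma sweep_eq_0_if_orthogonal_to_fixed: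
  assumes proj: "\<And>k. orthogonal_projection (Q k)"
    and fixed_closed: "\<And>k l y. Q k *v y = y \<Longrightarrow> Q k *v (Q l *v y) = Q l *v y"
    and "set ks = UNIV"
    and orth: "\<And>y. (\<And>k. Q k *v y = y) \<Longrightarrow> hinner y z = 0"
  shows "sweep Q ks z = 0"
proof -
  define y where "y = sweep Q ks z"
  have fixed: "Q k *v y = y" for k
    using sweep_fixed[where Q = Q, OF proj fixed_closed] \<open>set ks = UNIV\<close> by (simp add: y_def)
  have "hinner y y = hinner y z"
    using hinner_sweep_if_fixed[where Q = Q, OF proj fixed] by (simp add: y_def)
  also have "\<dots> = 0" using orth fixed by blast
  finally show ?thesis by (simp add: y_def hinner_self_eq_0)
qed

section \<open>Averaging a representation over a subgroup\<close>

definition invariant_vectors ::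
  "(complex^'n^'n \<Rightarrow> complex^'m^'m) \<Rightarrow> (complex^'n^'n) set \<Rightarrow> (complex^'m) set" where
  "invariant_vectors \<rho> G = {x. \<forall>g\<in>G. \<rho> g *v x = x}"

lemma invariant_vectors_antimono: "G \<subseteq> H \<Longrightarrow> invariant_vectors \<rho> H \<subseteq> invariant_vectors \<rho> G"
  by (auto simp: invariant_vectors_def)

lemma unitary_rep_mult:
  "unitary_rep \<rho> \<Longrightarrow> A \<in> unitary_group \<Longrightarrow> B \<in> unitary_group \<Longrightarrow> \<rho> (A ** B) = \<rho> A ** \<rho> B"
  by (simp add: unitary_rep_def)

lemma bounded_linear_matrix_vector_mult_left:
  "bounded_linear (\<lambda>N::complex^'m::finite^'k::finite. N *v x)"
proof -
  have "linear (\<lambda>N::complex^'m^'k. N *v x)"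
    by (rule linearI) (simp_all add: vec_eq_iff matrix_vector_mult_def scaleR_sum_right
        sum.distrib distrib_right)
  then show ?thesis using linear_conv_bounded_linear by blast
qed

lemma bounded_linear_matrix_mult_left:
  "bounded_linear (\<lambda>N::complex^'m::finite^'m. G ** N)"
proof -
  have "linear (\<lambda>N::complex^'m^'m. G ** N)"
    by (rule linearI) (simp_all add: vec_eq_iff matrix_matrix_mult_def scaleR_sum_right
        sum.distrib distrib_left)
  then show ?thesis using linear_conv_bounded_linear by blast
qed

lemma bounded_linear_matrix_mult_right:
  "bounded_linear (\<lambda>N::complex^'m::finite^'m. N ** G)"
proof -
  have "linear (\<lambda>N::complex^'m^'m. N ** G)"
    by (rule linearI) (simp_all add: vec_eq_iff matrix_matrix_mult_def scaleR_sum_right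
        sum.distrib distrib_right)
  then show ?thesis using linear_conv_bounded_linear by blast
qed

context
  fixes M :: "(complex^'n::finite^'n) measure" and U :: "(complex^'n^'n) set"
    and \<rho> :: "complex^'n^'n \<Rightarrow> complex^'m::finite^'m"
  assumes haar: "is_haar_prob M U" and rep: "unitary_rep \<rho>"
    and U_unitary: "U \<subseteq> unitary_group"
    and U_mult: "\<And>g A. g \<in> U \<Longrightarrow> A \<in> U \<Longrightarrow> g ** A \<in> U"
begin

lemma prob_space_haar: "prob_space M"
  using haar by (simp add: is_haar_prob_def)

lemma sets_haar: "sets M = sets borel"
  using haar by (simp add: is_haar_prob_def)

lemma space_haar: "space M = UNIV"
  using sets_eq_imp_space_eq[OF sets_haar] by simp

lemma measure_haar_support: "measure M U = 1"
  using haar by (simp add: is_haar_prob_def measure_def)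

lemma support_in_sets_haar: "U \<in> sets M"
  using haar emeasure_notin_sets by (fastforce simp: is_haar_prob_def)

lemma AE_in_support_haar: "AE A in M. A \<in> U"
  using prob_space.AE_prob_1[OF prob_space_haar measure_haar_support] .

lemma unitary_rep_on_support: "A \<in> U \<Longrightarrow> unitary_mat (\<rho> A)"
  using rep U_unitary by (auto simp: unitary_rep_def)

lemma borel_measurable_indicator_rep: "(\<lambda>A. indicator U A *\<^sub>R \<rho> A) \<in> borel_measurable M"
proof -
  have "continuous_on U \<rho>"
    using rep U_unitary continuous_on_subset by (auto simp: unitary_rep_def)
  then have "(\<lambda>A. indicator U A *\<^sub>R \<rho> A) \<in> borel_measurable borel"
    using support_in_sets_haar sets_haar by (intro borel_measurable_continuous_on_indicator) auto
  then show ?thesis using measurable_cong_sets[OF sets_haar refl] by blast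
qed

lemma integrable_indicator_rep: "integrable M (\<lambda>A. indicator U A *\<^sub>R \<rho> A)"
proof (rule finite_measure.integrable_const_bound[OF prob_space.finite_measure[OF prob_space_haar]
      AE_I2 borel_measurable_indicator_rep])
  show "norm (indicator U A *\<^sub>R \<rho> A) \<le> real CARD('m)" for A
    using unitary_rep_on_support norm_unitary_mat_le by (cases "A \<in> U") auto
qed

lemma haar_average_eq: "(LINT A:U|M. \<rho> A) = integral\<^sup>L M (\<lambda>A. indicator U A *\<^sub>R \<rho> A)"
  by (simp add: set_lebesgue_integral_def)

lemma haar_average_vector:
  "(LINT A:U|M. \<rho> A) *v x = integral\<^sup>L M (\<lambda>A. indicator U A *\<^sub>R (\<rho> A *v x))"
proof -
  have "(LINT A:U|M. \<rho> A) *v x = integral\<^sup>L M (\<lambda>A. (indicator U A *\<^sub>R \<rho> A) *v x)"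
    unfolding haar_average_eq
    by (rule integral_bounded_linear[OF bounded_linear_matrix_vector_mult_left
          integrable_indicator_rep, symmetric])
  also have "\<dots> = integral\<^sup>L M (\<lambda>A. indicator U A *\<^sub>R (\<rho> A *v x))"
    by (rule Bochner_Integration.integral_cong) (auto simp: indicator_def)
  finally show ?thesis .
qed

lemma measurable_left_mult: "(\<lambda>A. g ** A) \<in> measurable M M"
proof -
  have "continuous_on UNIV (\<lambda>A::complex^'n^'n. g ** A)"
    using linear_continuous_on bounded_linear_matrix_mult_left by blast
  then show ?thesis
    using borel_measurable_continuous_onI measurable_cong_sets[OF sets_haar sets_haar] by blast
qed

lemma distr_left_mult_haar: "g \<in> U \<Longrightarrow> distr M M (\<lambda>A. g ** A) = M"
proof (rule measure_eqI)
  fix S assume "g \<in> U" "S \<in> sets (distr M M (\<lambda>A. g ** A))"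
  then show "emeasure (distr M M (\<lambda>A. g ** A)) S = emeasure M S"
    using haar sets_haar measurable_left_mult
    by (simp add: emeasure_distr space_haar is_haar_prob_def)
qed simp

lemma rep_mult_haar_average:
  assumes g: "g \<in> U"
  shows "\<rho> g ** (LINT A:U|M. \<rho> A) = (LINT A:U|M. \<rho> A)"
proof -
  let ?f = "\<lambda>A. indicator U A *\<^sub>R \<rho> A"
  have "\<rho> g ** (LINT A:U|M. \<rho> A) = integral\<^sup>L M (\<lambda>A. \<rho> g ** ?f A)"
    unfolding haar_average_eq
    by (rule integral_bounded_linear[OF bounded_linear_matrix_mult_left
          integrable_indicator_rep, symmetric])
  also have "\<dots> = integral\<^sup>L M (\<lambda>A. ?f (g ** A))"
  proof (rule integral_cong_AE)
    show "(\<lambda>A. \<rho> g ** ?f A) \<in> borel_measurable M"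
      using borel_measurable_indicator_rep
        borel_measurable_continuous_on[OF linear_continuous_on[OF bounded_linear_matrix_mult_left]]
      by blast
    show "(\<lambda>A. ?f (g ** A)) \<in> borel_measurable M"
      using measurable_comp[OF measurable_left_mult borel_measurable_indicator_rep]
      by (simp add: comp_def)
    show "AE A in M. \<rho> g ** ?f A = ?f (g ** A)"
      using AE_in_support_haar
    proof (rule AE_mp, intro AE_I2 impI)
      fix A assume A: "A \<in> U"
      have "\<rho> (g ** A) = \<rho> g ** \<rho> A"
        using unitary_rep_mult[OF rep] g A U_unitary by blast
      then show "\<rho> g ** ?f A = ?f (g ** A)" using A U_mult[OF g A] by simp
    qed
  qed
  also have "\<dots> = integral\<^sup>L (distr M M (\<lambda>A. g ** A)) ?f"
    by (rule integral_distr[symmetric, OF measurable_left_mult borel_measurable_indicator_rep])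
  also have "\<dots> = (LINT A:U|M. \<rho> A)"
    unfolding distr_left_mult_haar[OF g] haar_average_eq ..
  finally show ?thesis .
qed

lemma haar_average_invariant: "(LINT A:U|M. \<rho> A) *v x \<in> invariant_vectors \<rho> U"
  using rep_mult_haar_average by (simp add: invariant_vectors_def matrix_vector_mul_assoc)

lemma haar_average_fixes_invariant:
  assumes "y \<in> invariant_vectors \<rho> U"
  shows "(LINT A:U|M. \<rho> A) *v y = y"
proof -
  have "(LINT A:U|M. \<rho> A) *v y = integral\<^sup>L M (\<lambda>A. indicator U A *\<^sub>R y)"
    unfolding haar_average_vector
    using assms
    by (intro Bochner_Integration.integral_cong) (auto simp: indicator_def invariant_vectors_def)
  also have "\<dots> = integral\<^sup>L M (indicator U) *\<^sub>R y"
    using haar support_in_sets_haar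
    by (intro integral_scaleR_left) (simp add: integrable_indicator_iff space_haar is_haar_prob_def)
  also have "\<dots> = y"
    using measure_haar_support space_haar by simp
  finally show ?thesis .
qed

lemma haar_average_fixed_iff: "(LINT A:U|M. \<rho> A) *v y = y \<longleftrightarrow> y \<in> invariant_vectors \<rho> U"
  using haar_average_invariant haar_average_fixes_invariant by metis

lemma norm_haar_average_le: "norm ((LINT A:U|M. \<rho> A) *v x) \<le> norm x"
proof -
  have "norm ((LINT A:U|M. \<rho> A) *v x) \<le> (\<integral>A. norm (indicator U A *\<^sub>R (\<rho> A *v x)) \<partial>M)"
    unfolding haar_average_vector by (rule integral_norm_bound)
  also have "\<dots> = (\<integral>A. indicator U A * norm x \<partial>M)"
    using unitary_rep_on_support norm_unitary_mat_vector_mult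
    by (intro Bochner_Integration.integral_cong) (auto simp: indicator_def)
  also have "\<dots> = norm x"
    using measure_haar_support support_in_sets_haar by simp
  finally show ?thesis .
qed

lemma orthogonal_projection_haar_average: "orthogonal_projection (LINT A:U|M. \<rho> A)"
proof (rule orthogonal_projection_if_contraction[OF _ norm_haar_average_le])
  show "(LINT A:U|M. \<rho> A) ** (LINT A:U|M. \<rho> A) = (LINT A:U|M. \<rho> A)"
    using haar_average_invariant haar_average_fixes_invariant
    by (simp add: matrix_eq flip: matrix_vector_mul_assoc)
qed

lemma haar_average_commute:
  assumes "\<And>A. A \<in> U \<Longrightarrow> \<rho> g ** \<rho> A = \<rho> A ** \<rho> g"
  shows "\<rho> g ** (LINT A:U|M. \<rho> A) = (LINT A:U|M. \<rho> A) ** \<rho> g"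
proof -
  let ?f = "\<lambda>A. indicator U A *\<^sub>R \<rho> A"
  have "\<rho> g ** (LINT A:U|M. \<rho> A) = integral\<^sup>L M (\<lambda>A. \<rho> g ** ?f A)"
    unfolding haar_average_eq
    by (rule integral_bounded_linear[OF bounded_linear_matrix_mult_left
          integrable_indicator_rep, symmetric])
  also have "\<dots> = integral\<^sup>L M (\<lambda>A. ?f A ** \<rho> g)"
    using assms by (intro Bochner_Integration.integral_cong) (auto simp: indicator_def)
  also have "\<dots> = (LINT A:U|M. \<rho> A) ** \<rho> g"
    unfolding haar_average_eq
    by (rule integral_bounded_linear[OF bounded_linear_matrix_mult_right integrable_indicator_rep])
  finally show ?thesis .
qed

end

section \<open>The subgroups \<open>U_B\<close> and the torus\<close>

lemma U_sub_unitary_group: "U_sub B \<subseteq> unitary_group"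
  by (auto simp: U_sub_def)

lemma U_sub_entry: "A \<in> U_sub B \<Longrightarrow> i \<notin> B \<or> j \<notin> B \<Longrightarrow> A $ i $ j = (if i = j then 1 else 0)"
  by (auto simp: U_sub_def)

lemma U_sub_mono: "B \<subseteq> C \<Longrightarrow> U_sub B \<subseteq> U_sub C"
  by (auto simp: U_sub_def)

lemma mat_1_in_U_sub: "mat 1 \<in> U_sub B"
  using unitary_mat_1 by (auto simp: U_sub_def unitary_group_def mat_def)

lemma matrix_mult_in_U_sub:
  assumes g: "g \<in> U_sub B" and A: "A \<in> U_sub B"
  shows "g ** A \<in> U_sub B"
proof -
  have "(g ** A) $ i $ j = (if i = j then 1 else 0)" if "i \<notin> B \<or> j \<notin> B" for i j
  proof -
    have "(g ** A) $ i $ j = (\<Sum>l\<in>UNIV. g $ i $ l * A $ l $ j)"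
      by (simp add: matrix_matrix_mult_def)
    also have "\<dots> = (if i = j then 1 else 0)"
    proof (cases "i \<in> B")
      case True
      then have "j \<notin> B" using that by blast
      then show ?thesis
        using U_sub_entry[OF g] U_sub_entry[OF A] by (subst sum_UNIV_eq_single[of j]) auto
    next
      case False
      then show ?thesis
        using U_sub_entry[OF g] U_sub_entry[OF A] by (subst sum_UNIV_eq_single[of i]) auto
    qed
    finally show ?thesis .
  qed
  moreover have "unitary_mat (g ** A)"
    using g A by (intro unitary_mat_mult) (auto simp: U_sub_def unitary_group_def)
  ultimately show ?thesis by (auto simp: U_sub_def unitary_group_def)
qed

lemma U_sub_singleton_commute:
  assumes g: "g \<in> U_sub B" and t: "t \<in> U_sub {k}" and "k \<notin> B"
  shows "g ** t = t ** g"
proof -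
  have diag: "t $ i $ j = 0" if "i \<noteq> j" for i j
    using U_sub_entry[OF t, of i j] that by auto
  have "g $ i $ j * t $ j $ j = t $ i $ i * g $ i $ j" for i j
  proof (cases "i \<noteq> j \<and> i \<in> B \<and> j \<in> B")
    case True
    then have "t $ i $ i = 1" "t $ j $ j = 1"
      using \<open>k \<notin> B\<close> U_sub_entry[OF t, of i i] U_sub_entry[OF t, of j j] by auto
    then show ?thesis by simp
  next
    case False
    then show ?thesis using U_sub_entry[OF g, of i j] by auto
  qed
  then show ?thesis
    by (simp add: vec_eq_iff matrix_mult_diagonal_left matrix_mult_diagonal_right diag)
qed

lemma torus_off_diagonal: "t \<in> torus \<Longrightarrow> i \<noteq> j \<Longrightarrow> t $ i $ j = 0"
  by (simp add: torus_def)

lemma torus_diagonal_unimodular: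
  assumes "t \<in> torus"
  shows "t $ i $ i * cnj (t $ i $ i) = 1"
proof -
  have "t ** cadj t = mat 1"
    using assms by (simp add: torus_def unitary_group_def unitary_mat_def)
  moreover have "(t ** cadj t) $ i $ i = t $ i $ i * cadj t $ i $ i"
    by (rule matrix_mult_diagonal_right) (simp add: cadj_def torus_off_diagonal[OF assms])
  ultimately show ?thesis by (simp add: cadj_def mat_def)
qed

lemma torus_split_singleton:
  assumes t: "t \<in> torus"
  obtains t' e where "t' \<in> torus" "e \<in> U_sub {k}" "t = t' ** e" "t' $ k $ k = 1"
    "\<And>i. i \<noteq> k \<Longrightarrow> t' $ i $ i = t $ i $ i"
proof
  define t' where "t' = (\<chi> i j. if i = k \<and> j = k then 1 else t $ i $ j)"
  define e where "e = (\<chi> i j. if i = j then (if i = k then t $ k $ k else 1) else (0::complex))"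
  have "unitary_mat t'"
    by (rule unitary_mat_diagonal)
      (auto simp: t'_def torus_off_diagonal[OF t] torus_diagonal_unimodular[OF t])
  then show "t' \<in> torus"
    by (auto simp: torus_def unitary_group_def t'_def torus_off_diagonal[OF t])
  have "unitary_mat e"
    by (rule unitary_mat_diagonal) (auto simp: e_def torus_diagonal_unimodular[OF t])
  then show "e \<in> U_sub {k}"
    by (auto simp: U_sub_def unitary_group_def e_def)
  show "t = t' ** e"
    by (auto simp: vec_eq_iff matrix_mult_diagonal_right e_def t'_def torus_off_diagonal[OF t])
  show "t' $ k $ k = 1" "\<And>i. i \<noteq> k \<Longrightarrow> t' $ i $ i = t $ i $ i"
    by (simp_all add: t'_def)
qed

text \<open>The torus is generated by the subgroups \<open>U_{k}\<close>.\<close>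
lemma TorInv_if_invariant_U_sub_singletons:
  assumes rep: "unitary_rep \<rho>" and inv: "\<And>k. y \<in> invariant_vectors \<rho> (U_sub {k})"
  shows "y \<in> TorInv \<rho>"
proof -
  have "\<rho> t *v y = y" if "finite S" "t \<in> torus" "\<forall>i. i \<notin> S \<longrightarrow> t $ i $ i = 1" for S t
    using that
  proof (induction S arbitrary: t rule: finite_induct)
    case empty
    then have "t = mat 1" by (auto simp: vec_eq_iff mat_def torus_off_diagonal)
    then show ?case using inv mat_1_in_U_sub by (auto simp: invariant_vectors_def)
  next
    case (insert k S)
    obtain t' e where t': "t' \<in> torus" "e \<in> U_sub {k}" "t = t' ** e" "t' $ k $ k = 1"
      "\<And>i. i \<noteq> k \<Longrightarrow> t' $ i $ i = t $ i $ i"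
      using torus_split_singleton[OF insert.prems(1)] by blast
    have "t' \<in> unitary_group" "e \<in> unitary_group"
      using t'(1,2) U_sub_unitary_group by (auto simp: torus_def)
    then have "\<rho> t = \<rho> t' ** \<rho> e"
      using unitary_rep_mult[OF rep] t'(3) by simp
    then have "\<rho> t *v y = \<rho> t' *v (\<rho> e *v y)" by (simp add: matrix_vector_mul_assoc)
    also have "\<dots> = \<rho> t' *v y" using inv t'(2) by (simp add: invariant_vectors_def)
    also have "\<dots> = y"
    proof (rule insert.IH[OF t'(1)])
      show "\<forall>i. i \<notin> S \<longrightarrow> t' $ i $ i = 1"
        using t'(4,5) insert.prems(2) by (metis insertE)
    qed
    finally show ?case .
  qed
  from this[of UNIV] show ?thesis by (simp add: TorInv_def)
qed

section \<open>The spectral bound\<close>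

lemma orthogonal_projection_U_sub_average:
  "is_haar_prob \<mu> (U_sub B) \<Longrightarrow> unitary_rep \<rho> \<Longrightarrow> orthogonal_projection (LINT A:U_sub B|\<mu>. \<rho> A)"
  by (rule orthogonal_projection_haar_average[OF _ _ U_sub_unitary_group matrix_mult_in_U_sub])

lemma U_sub_average_fixed_iff:
  "is_haar_prob \<mu> (U_sub B) \<Longrightarrow> unitary_rep \<rho> \<Longrightarrow>
    (LINT A:U_sub B|\<mu>. \<rho> A) *v y = y \<longleftrightarrow> y \<in> invariant_vectors \<rho> (U_sub B)"
  by (rule haar_average_fixed_iff[OF _ _ U_sub_unitary_group matrix_mult_in_U_sub])

lemma U_sub_singleton_average_preserves_invariant:
  assumes haar: "is_haar_prob \<mu> (U_sub {k})" and rep: "unitary_rep \<rho>"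
    and y: "y \<in> invariant_vectors \<rho> (U_sub B)"
  shows "(LINT A:U_sub {k}|\<mu>. \<rho> A) *v y \<in> invariant_vectors \<rho> (U_sub B)"
proof (cases "k \<in> B")
  case True
  then have "invariant_vectors \<rho> (U_sub B) \<subseteq> invariant_vectors \<rho> (U_sub {k})"
    by (simp add: invariant_vectors_antimono U_sub_mono)
  then have "(LINT A:U_sub {k}|\<mu>. \<rho> A) *v y = y"
    using y U_sub_average_fixed_iff[OF haar rep] by blast
  then show ?thesis using y by simp
next
  case False
  let ?P = "LINT A:U_sub {k}|\<mu>. \<rho> A"
  have "\<rho> g *v (?P *v y) = ?P *v y" if g: "g \<in> U_sub B" for g
  proof -
    have "\<rho> g ** ?P = ?P ** \<rho> g"
    proof (rule haar_average_commute[OF haar rep U_sub_unitary_group matrix_mult_in_U_sub])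
      fix A assume A: "A \<in> U_sub {k}"
      have "g \<in> unitary_group" "A \<in> unitary_group"
        using g A U_sub_unitary_group by blast+
      then show "\<rho> g ** \<rho> A = \<rho> A ** \<rho> g"
        using U_sub_singleton_commute[OF g A False] unitary_rep_mult[OF rep] by metis
    qed
    then have "\<rho> g *v (?P *v y) = ?P *v (\<rho> g *v y)"
      by (simp add: matrix_vector_mul_assoc)
    also have "\<dots> = ?P *v y"
      using y g by (simp add: invariant_vectors_def)
    finally show ?thesis .
  qed
  then show ?thesis by (simp add: invariant_vectors_def)
qed

lemma phi_le: "phi w \<le> (\<Sum>B\<in>{B. i \<in> B}. w B)"
  unfolding phi_def by (rule Min_le) auto

lemma phi_mult_sum_le:
  fixes w :: "'n::finite set \<Rightarrow> real" and i :: "'p \<Rightarrow> 'n"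
  assumes "\<And>B. w B \<ge> 0" and "finite P" and "\<And>p. p \<in> P \<Longrightarrow> a p \<ge> 0"
    and "\<And>B. (\<Sum>p\<in>{p\<in>P. i p \<in> B}. a p) \<le> c B"
  shows "phi w * (\<Sum>p\<in>P. a p) \<le> (\<Sum>B\<in>UNIV. w B * c B)"
proof -
  have "phi w * (\<Sum>p\<in>P. a p) \<le> (\<Sum>p\<in>P. (\<Sum>B\<in>{B. i p \<in> B}. w B) * a p)"
    unfolding sum_distrib_left by (intro sum_mono mult_right_mono phi_le assms(3))
  also have "\<dots> = (\<Sum>p\<in>P. \<Sum>B\<in>UNIV. if i p \<in> B then w B * a p else 0)"
    by (simp add: sum_distrib_right sum.If_cases)
  also have "\<dots> = (\<Sum>B\<in>UNIV. w B * (\<Sum>p\<in>{p\<in>P. i p \<in> B}. a p))"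
    using \<open>finite P\<close> by (subst sum.swap) (simp add: sum_distrib_left sum.inter_filter[symmetric])
  also have "\<dots> \<le> (\<Sum>B\<in>UNIV. w B * c B)"
    by (intro sum_mono mult_left_mono assms(1,4))
  finally show ?thesis .
qed

lemma hinner_hyper_laplacian:
  fixes \<rho> :: "complex^'n::finite^'n \<Rightarrow> complex^'m::finite^'m"
  assumes haar: "\<And>B. is_haar_prob (\<mu> B) (U_sub B)" and rep: "unitary_rep \<rho>"
  shows "hinner v (hyper_laplacian w \<mu> \<rho> *v v)
    = of_real (\<Sum>B\<in>UNIV. w B * (norm (v - (LINT A:U_sub B|\<mu> B. \<rho> A) *v v))\<^sup>2)"
proof -
  define P where "P B = (LINT A:U_sub B|\<mu> B. \<rho> A)" for B
  have lin: "linear (\<lambda>N::complex^'m^'m. N *v v)"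
    using bounded_linear_matrix_vector_mult_left by (rule bounded_linear.linear)
  have "hyper_laplacian w \<mu> \<rho> *v v = (\<Sum>B\<in>UNIV. w B *\<^sub>R (v - P B *v v))"
    unfolding hyper_laplacian_def P_def
    by (simp add: linear_sum[OF lin] linear_scale[OF lin] matrix_vector_mult_diff_rdistrib)
  then have "hinner v (hyper_laplacian w \<mu> \<rho> *v v)
      = (\<Sum>B\<in>UNIV. of_real (w B) * hinner v (v - P B *v v))"
    by (simp add: hinner_sum_right hinner_scaleR_right)
  also have "\<dots> = (\<Sum>B\<in>UNIV. of_real (w B * (norm (v - P B *v v))\<^sup>2))"
    unfolding P_def of_real_mult
    using hinner_self_orthogonal_projection_residual[OF orthogonal_projection_U_sub_average[OF haar rep]]
    by (simp only:)
  finally show ?thesis by (simp add: P_def)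
qed

lemma sweep_singleton_averages_eq_0:
  fixes \<rho> :: "complex^'n::finite^'n \<Rightarrow> complex^'m::finite^'m"
  assumes haar: "\<And>B. is_haar_prob (\<mu> B) (U_sub B)" and rep: "unitary_rep \<rho>"
    and v: "v \<in> orth_compl (TorInv \<rho>)" and xs: "set xs = UNIV"
  shows "sweep (\<lambda>k. LINT A:U_sub {k}|\<mu> {k}. \<rho> A) xs v = 0"
proof -
  define Q where "Q k = (LINT A:U_sub {k}|\<mu> {k}. \<rho> A)" for k
  have fixed_iff: "Q k *v y = y \<longleftrightarrow> y \<in> invariant_vectors \<rho> (U_sub {k})" for k y
    unfolding Q_def using haar rep by (rule U_sub_average_fixed_iff)
  have "sweep Q xs v = 0"
  proof (rule sweep_eq_0_if_orthogonal_to_fixed[where Q = Q, OF _ _ xs])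
    show "orthogonal_projection (Q k)" for k
      unfolding Q_def using haar rep by (rule orthogonal_projection_U_sub_average)
    show "Q k *v (Q l *v y) = Q l *v y" if "Q k *v y = y" for k l y
    proof -
      have "y \<in> invariant_vectors \<rho> (U_sub {k})" using that fixed_iff by blast
      then have "Q l *v y \<in> invariant_vectors \<rho> (U_sub {k})"
        unfolding Q_def by (rule U_sub_singleton_average_preserves_invariant[OF haar rep])
      then show ?thesis using fixed_iff by blast
    qed
    show "hinner y v = 0" if "\<And>k. Q k *v y = y" for y
    proof -
      have "y \<in> TorInv \<rho>"
        using rep by (rule TorInv_if_invariant_U_sub_singletons) (use that fixed_iff in blast)
      then show ?thesis using v by (simp add: orth_compl_def)
    qed
  qed
  then show ?thesis by (simp only: Q_def[abs_def])
qed

text \<open>The defects at the positions \<open>p\<close> with \<open>xs ! p \<in> B\<close> do not change when \<open>P_B v\<close> is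
  subtracted from the starting vector, since the projections keep \<open>P_B v\<close> \<open>U_B\<close>-invariant.\<close>
lemma sweep_singleton_averages_defects_le:
  fixes \<rho> :: "complex^'n::finite^'n \<Rightarrow> complex^'m::finite^'m"
  assumes haar: "\<And>B. is_haar_prob (\<mu> B) (U_sub B)" and rep: "unitary_rep \<rho>"
  shows "(\<Sum>p\<in>{p\<in>{..<length xs}. xs ! p \<in> B}.
      (norm (sweep_defect (\<lambda>k. LINT A:U_sub {k}|\<mu> {k}. \<rho> A) xs v p))\<^sup>2)
    \<le> (norm (v - (LINT A:U_sub B|\<mu> B. \<rho> A) *v v))\<^sup>2"
proof (rule sweep_defect_sum_le)
  show "orthogonal_projection (LINT A:U_sub {k}|\<mu> {k}. \<rho> A)" for k
    using haar rep by (rule orthogonal_projection_U_sub_average)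
  show "(LINT A:U_sub {k}|\<mu> {k}. \<rho> A) *v y \<in> invariant_vectors \<rho> (U_sub B)"
    if "y \<in> invariant_vectors \<rho> (U_sub B)" for k y
    using haar rep that by (rule U_sub_singleton_average_preserves_invariant)
  show "(LINT A:U_sub {k}|\<mu> {k}. \<rho> A) *v y = y"
    if "k \<in> B" "y \<in> invariant_vectors \<rho> (U_sub B)" for k y
  proof -
    have "invariant_vectors \<rho> (U_sub B) \<subseteq> invariant_vectors \<rho> (U_sub {k})"
      using \<open>k \<in> B\<close> by (simp add: invariant_vectors_antimono U_sub_mono)
    then show ?thesis using that U_sub_average_fixed_iff[OF haar rep] by auto
  qed
  show "(LINT A:U_sub B|\<mu> B. \<rho> A) *v v \<in> invariant_vectors \<rho> (U_sub B)"
    using orthogonal_projection_idem[OF orthogonal_projection_U_sub_average[OF haar rep]]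
    by (simp add: U_sub_average_fixed_iff[OF haar rep, symmetric])
qed

lemma laplacian_energy_ge_phi:
  fixes w :: "'n::finite set \<Rightarrow> real" and \<rho> :: "complex^'n^'n \<Rightarrow> complex^'m::finite^'m"
  assumes w: "\<And>B. w B \<ge> 0" and haar: "\<And>B. is_haar_prob (\<mu> B) (U_sub B)"
    and rep: "unitary_rep \<rho>" and v: "v \<in> orth_compl (TorInv \<rho>)"
  shows "phi w * (norm v)\<^sup>2 \<le> (\<Sum>B\<in>UNIV. w B * (norm (v - (LINT A:U_sub B|\<mu> B. \<rho> A) *v v))\<^sup>2)"
proof -
  define Q where "Q = (\<lambda>k. LINT A:U_sub {k}|\<mu> {k}. \<rho> A)"
  obtain xs :: "'n list" where xs: "set xs = UNIV"
    using finite_list[OF finite_class.finite_UNIV] by blast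
  have "(norm v)\<^sup>2 = (\<Sum>p<length xs. (norm (sweep_defect Q xs v p))\<^sup>2)"
    using norm_square_sweep[where Q = Q and z = v and ks = xs]
      orthogonal_projection_U_sub_average[OF haar rep]
      sweep_singleton_averages_eq_0[OF haar rep v xs]
    by (simp add: Q_def)
  moreover have "phi w * (\<Sum>p<length xs. (norm (sweep_defect Q xs v p))\<^sup>2)
      \<le> (\<Sum>B\<in>UNIV. w B * (norm (v - (LINT A:U_sub B|\<mu> B. \<rho> A) *v v))\<^sup>2)"
    using sweep_singleton_averages_defects_le[OF haar rep]
    by (intro phi_mult_sum_le[OF w]) (auto simp: Q_def)
  ultimately show ?thesis by simp
qed

theorem lemma3p10:
  fixes w :: "'n::finite set \<Rightarrow> real"
    and \<mu> :: "'n set \<Rightarrow> (complex^'n^'n) measure"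
    and \<rho> :: "complex^'n^'n \<Rightarrow> complex^'m::finite^'m"
    and lam :: complex and v :: "complex^'m"
  assumes "\<And>B. w B \<ge> 0"
    and "\<And>B. is_haar_prob (\<mu> B) (U_sub B)"
    and "unitary_rep \<rho>"
    and "v \<in> orth_compl (TorInv \<rho>)" and "v \<noteq> 0"
    and "hyper_laplacian w \<mu> \<rho> *v v = lam *s v"
  shows "Im lam = 0 \<and> Re lam \<ge> phi w"
proof -
  define E where "E = (\<Sum>B\<in>UNIV. w B * (norm (v - (LINT A:U_sub B|\<mu> B. \<rho> A) *v v))\<^sup>2)"
  have "lam * of_real ((norm v)\<^sup>2) = hinner v (hyper_laplacian w \<mu> \<rho> *v v)"
    using assms(6) by (simp add: hinner_scalar_right hinner_self)
  also have "\<dots> = of_real E"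
    unfolding E_def using assms(2,3) by (rule hinner_hyper_laplacian)
  finally have "lam * of_real ((norm v)\<^sup>2) = of_real E" .
  moreover have "(norm v)\<^sup>2 > 0"
    using \<open>v \<noteq> 0\<close> by simp
  ultimately have "lam = of_real (E / (norm v)\<^sup>2)"
    by (simp add: field_simps)
  moreover have "phi w \<le> E / (norm v)\<^sup>2"
    using laplacian_energy_ge_phi[OF assms(1-4)] \<open>(norm v)\<^sup>2 > 0\<close>
    by (simp add: E_def pos_le_divide_eq)
  ultimately show ?thesis by simp
qed

end
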